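(* Let $p>5$ be a prime, $q=p^h$, and let $\mathcal{F}$ be the projective closure of $ax^n+by^m=1$ over $\mathbb{F}_q$, with $a,b\in\mathbb{F}_q^*$ and $m,n$ positive integers with $n\ge m>2$. If $p\mid(2n-1)$ and $p\mid(m-1)$, then $\mathcal{F}$ is $\mathbb{F}_q$-Frobenius classical with respect to conics.
   Context: With $\varphi_0,\dots,\varphi_5$ the monomials of degree 2 in $x,y,1$, $\tau$ separating and $D^{(k)}_\tau$ Hasse derivatives, the $\mathbb{F}_q$-Frobenius order sequence w.r.t. conics is the lexicographically smallest $\nu_0<\dots<\nu_4$ such that the $6\times6$ determinant with first row $(\varphi_j^q)_j$ and rows $(D^{(\nu_i)}_\tau\varphi_j)_j$ is nonzero; the curve is $\mathbb{F}_q$-Frobenius classical w.r.t. conics if $\nu_i=i$ for all $i$. *)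

theory Defs
  imports Main "Jordan_Normal_Form.Determinant"
begin

definition is_field_emb :: "('a::field \<Rightarrow> 'k::field) \<Rightarrow> bool" where
  "is_field_emb \<iota> \<longleftrightarrow> inj \<iota> \<and> \<iota> 0 = 0 \<and> \<iota> 1 = 1 \<and>
     (\<forall>u v. \<iota> (u + v) = \<iota> u + \<iota> v) \<and> (\<forall>u v. \<iota> (u * v) = \<iota> u * \<iota> v)"

text \<open>K (with embedding of F_q) is the function field F_q(x,y) of the curve
  a x^n + b y^m = 1: x is transcendental over F_q, x and y satisfy the equation,
  and K is generated over F_q by x and y (every element is a quotient of
  polynomial expressions in x, y with coefficients in F_q).\<close>
definition fermat_function_field ::
  "('a::field \<Rightarrow> 'k::field) \<Rightarrow> 'a \<Rightarrow> 'a \<Rightarrow> nat \<Rightarrow> nat \<Rightarrow> 'k \<Rightarrow> 'k \<Rightarrow> bool" where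
  "fermat_function_field \<iota> a b n m x y \<longleftrightarrow>
     is_field_emb \<iota> \<and>
     \<iota> a * x ^ n + \<iota> b * y ^ m = 1 \<and>
     (\<forall>(N::nat) (c::nat \<Rightarrow> 'a). (\<Sum>i<N. \<iota> (c i) * x ^ i) = 0 \<longrightarrow> (\<forall>i<N. c i = 0)) \<and>
     (\<forall>z. \<exists>(N::nat) (P::nat \<Rightarrow> nat \<Rightarrow> 'a) (Q::nat \<Rightarrow> nat \<Rightarrow> 'a).
        (\<Sum>i<N. \<Sum>j<N. \<iota> (Q i j) * x ^ i * y ^ j) \<noteq> 0 \<and>
        z = (\<Sum>i<N. \<Sum>j<N. \<iota> (P i j) * x ^ i * y ^ j) /
            (\<Sum>i<N. \<Sum>j<N. \<iota> (Q i j) * x ^ i * y ^ j))"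

text \<open>D is a family of Hasse derivatives of K over F_q with respect to tau:
  D^(0) = id, each D^(k) is additive and F_q-constant-killing, the generalized
  Leibniz rule holds, and D^(1) tau = 1, D^(k) tau = 0 for k >= 2.
  (Such a family exists exactly when tau is separating, and is then unique.)\<close>
definition hasse_derivatives ::
  "('a::field \<Rightarrow> 'k::field) \<Rightarrow> 'k \<Rightarrow> (nat \<Rightarrow> 'k \<Rightarrow> 'k) \<Rightarrow> bool" where
  "hasse_derivatives \<iota> \<tau> D \<longleftrightarrow>
     (\<forall>z. D 0 z = z) \<and>
     (\<forall>k u v. D k (u + v) = D k u + D k v) \<and>
     (\<forall>k u v. D k (u * v) = (\<Sum>i\<le>k. D i u * D (k - i) v)) \<and>
     (\<forall>k c. 1 \<le> k \<longrightarrow> D k (\<iota> c) = 0) \<and>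
     D 1 \<tau> = 1 \<and> (\<forall>k\<ge>2. D k \<tau> = 0)"

definition conic_monomials :: "'k::field \<Rightarrow> 'k \<Rightarrow> 'k list" where
  "conic_monomials x y = [x ^ 2, x * y, y ^ 2, x, y, 1]"

definition frob_conic_det ::
  "nat \<Rightarrow> (nat \<Rightarrow> 'k \<Rightarrow> 'k) \<Rightarrow> 'k list \<Rightarrow> nat list \<Rightarrow> 'k::field" where
  "frob_conic_det q D \<phi> \<nu> =
     det (mat 6 6 (\<lambda>(i, j). if i = 0 then (\<phi> ! j) ^ q else D (\<nu> ! (i - 1)) (\<phi> ! j)))"

definition frob_conic_order_seq ::
  "nat \<Rightarrow> (nat \<Rightarrow> 'k \<Rightarrow> 'k) \<Rightarrow> 'k \<Rightarrow> 'k::field \<Rightarrow> nat list \<Rightarrow> bool" where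
  "frob_conic_order_seq q D x y \<nu> \<longleftrightarrow>
     length \<nu> = 5 \<and> sorted_wrt (<) \<nu> \<and>
     frob_conic_det q D (conic_monomials x y) \<nu> \<noteq> 0 \<and>
     (\<forall>\<nu>'. length \<nu>' = 5 \<and> sorted_wrt (<) \<nu>' \<and>
            frob_conic_det q D (conic_monomials x y) \<nu>' \<noteq> 0 \<longrightarrow>
            \<nu> = \<nu>' \<or> lexordp (<) \<nu> \<nu>')"

definition frob_classical_conics ::
  "nat \<Rightarrow> (nat \<Rightarrow> 'k \<Rightarrow> 'k) \<Rightarrow> 'k \<Rightarrow> 'k::field \<Rightarrow> bool" where
  "frob_classical_conics q D x y \<longleftrightarrow> frob_conic_order_seq q D x y [0, 1, 2, 3, 4]"

end

(* Write w = a x^n, t = a^2 x^(2n-1) and g = b y^(m-1), so that x = w^2/t and y = (1 - w)/g: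
   the point (x, y) runs along a parabola with parameter w. Since p divides 2n - 1 and m - 1, t and
   g are constants times p-th powers, so their Hasse derivatives of orders 1 .. p - 1 vanish,
   whereas D^(1) w is nonzero because D^(1) cannot kill both x and y (tau is separating). Hence the
   Hasse series of x and y satisfy, up to order p > 4, the relations of the parabola in the
   variable w, and a conic satisfying the five differential rows contains the parabola, i.e. it is
   a multiple of (g Y - 1)^2 - t X. The Frobenius row kills this multiple: if (x^q, y^q) were on
   the parabola, then 1 - g y^q = c x^N with 2N = 2n - 1 + q, and comparing degrees in the
   transcendental x in b^(q-1) (1 - c x^N)^m = (1 - a x^n)^(m+q-1) would force m = 2n > n. *)

theory Submission
  imports Defs "HOL-Computational_Algebra.Polynomial_FPS" "HOL-Computational_Algebra.Primes"
    "HOL-Number_Theory.Residues"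
begin

hide_const (open) up_ring.coeff up_ring.monom

section \<open>Power series modulo powers of X\<close>

lemma fps_X_power_dvd_iff:
  fixes f :: "'a::comm_ring_1 fps"
  shows "fps_X ^ r dvd f \<longleftrightarrow> (\<forall>k<r. fps_nth f k = 0)"
proof
  assume "fps_X ^ r dvd f"
  then obtain g where "f = fps_X ^ r * g" by (elim dvdE)
  then show "\<forall>k<r. fps_nth f k = 0" by (simp add: fps_X_power_mult_nth)
next
  assume "\<forall>k<r. fps_nth f k = 0"
  then have "f = fps_shift r f * fps_X ^ r"
    by (intro fps_ext) (simp add: fps_X_power_mult_right_nth)
  then show "fps_X ^ r dvd f" by (metis dvd_triv_right)
qed

lemma dvd_mult_diff_mult:
  fixes c :: "'a::comm_ring_1"
  assumes "c dvd a - a'" and "c dvd b - b'"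
  shows "c dvd a * b - a' * b'"
proof -
  have "a * b - a' * b' = a * (b - b') + (a - a') * b'" by (simp add: algebra_simps)
  then show ?thesis using assms by (simp add: dvd_add dvd_mult dvd_mult2)
qed

lemma fps_X_power_dvd_compose:
  fixes f g :: "'a::idom fps"
  assumes "fps_X ^ r dvd f" and "fps_nth g 0 = 0"
  shows "fps_X ^ r dvd f oo g"
proof -
  obtain h where "f = fps_X ^ r * h" using assms(1) by (elim dvdE)
  moreover have "fps_X ^ r oo g = g ^ r"
    using assms(2) by (simp flip: fps_compose_power)
  ultimately have "f oo g = g ^ r * (h oo g)"
    using assms(2) by (simp add: fps_compose_mult_distrib)
  moreover have "fps_X dvd g"
    using assms(2) fps_X_power_dvd_iff[of 1 g] by simp
  ultimately show ?thesis by (simp add: dvd_mult2 dvd_power_same)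
qed

lemma fps_of_poly_compose_eq_0:
  fixes P :: "'a::field poly"
  assumes d: "fps_nth d 0 = 0" "fps_nth d 1 \<noteq> 0"
    and "degree P < r" and "fps_X ^ r dvd fps_of_poly P oo d"
  shows "P = 0"
proof -
  have inv: "fps_nth (fps_inv d) 0 = 0" by (simp add: fps_inv_def)
  have "fps_of_poly P oo d oo fps_inv d = fps_of_poly P"
    using d inv by (simp flip: fps_compose_assoc add: fps_inv_right)
  then have "fps_X ^ r dvd fps_of_poly P"
    using fps_X_power_dvd_compose[OF assms(4) inv] by simp
  then have "coeff P k = 0" for k
    using assms(3) by (cases "k < r") (auto simp: fps_X_power_dvd_iff coeff_eq_0)
  then show ?thesis by (simp add: poly_eq_iff)
qed

section \<open>Conics through a parabola\<close>

definition conic :: "(nat \<Rightarrow> 'a::comm_ring_1) \<Rightarrow> 'a \<Rightarrow> 'a \<Rightarrow> 'a" where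
  "conic v X Y = v 0 * X\<^sup>2 + v 1 * (X * Y) + v 2 * Y\<^sup>2 + v 3 * X + v 4 * Y + v 5"

lemma sum_conic_monomials: "(\<Sum>j<6. v j * conic_monomials X Y ! j) = conic v X Y"
  by (simp add: conic_def conic_monomials_def numeral_eq_Suc lessThan_Suc algebra_simps)

lemma (in comm_ring_hom) hom_conic: "hom (conic v X Y) = conic (hom \<circ> v) (hom X) (hom Y)"
  by (simp add: conic_def hom_distribs)

lemma conic_dvd_diff:
  fixes c :: "'a::comm_ring_1"
  assumes "c dvd X - X'" and "c dvd Y - Y'"
  shows "c dvd conic v X Y - conic v X' Y'"
proof -
  have "conic v X Y - conic v X' Y' = v 0 * (X * X - X' * X') + v 1 * (X * Y - X' * Y')
      + v 2 * (Y * Y - Y' * Y') + v 3 * (X - X') + v 4 * (Y - Y')"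
    by (simp add: conic_def power2_eq_square algebra_simps)
  then show ?thesis using assms by (simp add: dvd_add dvd_mult dvd_mult_diff_mult)
qed

lemma conic_parabola_poly:
  fixes T s :: "'a::comm_ring_1"
  shows "conic (\<lambda>j. [:v j:]) ([:T:] * [:0, 1:]\<^sup>2) ([:s:] * (1 - [:0, 1:])) =
     [:v 2 * s\<^sup>2 + v 4 * s + v 5, - 2 * v 2 * s\<^sup>2 - v 4 * s, v 1 * T * s + v 2 * s\<^sup>2 + v 3 * T,
       - v 1 * T * s, v 0 * T\<^sup>2:]"
  by (simp add: conic_def power2_eq_square one_pCons algebra_simps)

lemma conic_vanishing_on_parabola:
  fixes T s :: "'a::field"
  assumes "T \<noteq> 0" and "s \<noteq> 0"
    and "conic (\<lambda>j. [:v j:]) ([:T:] * [:0, 1:]\<^sup>2) ([:s:] * (1 - [:0, 1:])) = 0"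
  shows "v 0 = 0 \<and> v 1 = 0 \<and> v 3 = - v 2 * s\<^sup>2 / T \<and> v 4 = - 2 * v 2 * s \<and> v 5 = v 2 * s\<^sup>2"
proof -
  have c0: "v 2 * s\<^sup>2 + v 4 * s + v 5 = 0" and c1: "- 2 * v 2 * s\<^sup>2 - v 4 * s = 0"
    and c2: "v 1 * T * s + v 2 * s\<^sup>2 + v 3 * T = 0" and c3: "- v 1 * T * s = 0"
    and c4: "v 0 * T\<^sup>2 = 0"
    using assms(3) unfolding conic_parabola_poly pCons_eq_0_iff by blast+
  have v1: "v 1 = 0" using c3 assms(1,2) by simp
  have "v 4 * s = (- 2 * v 2 * s) * s"
    using c1 by (simp add: power2_eq_square algebra_simps)
  then have v4: "v 4 = - 2 * v 2 * s"
    using assms(2) by (metis mult_right_cancel)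
  show ?thesis
    using c0 c2 c4 v1 v4 assms(1,2) by (simp add: field_simps power2_eq_square eq_neg_iff_add_eq_0)
qed

lemma conic_vanishing_on_fps_parabola:
  fixes W :: "'a::field fps"
  assumes "T \<noteq> 0" and "s \<noteq> 0" and W: "fps_nth W 1 \<noteq> 0"
    and rel: "fps_X ^ 5 dvd conic (\<lambda>j. fps_const (v j)) (fps_const T * W\<^sup>2) (fps_const s * (1 - W))"
  shows "v 0 = 0 \<and> v 1 = 0 \<and> v 3 = - v 2 * s\<^sup>2 / T \<and> v 4 = - 2 * v 2 * s \<and> v 5 = v 2 * s\<^sup>2"
proof -
  define w where "w = fps_nth W 0"
  define d where "d = W - fps_const w"
  \<comment> \<open>Substituting Z = w + d turns the relation into a polynomial in d of degree at most 4
    that vanishes to order 5; as d has order exactly 1, that polynomial is zero.\<close>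
  have d: "fps_nth d 0 = 0" "fps_nth d 1 \<noteq> 0"
    using W by (simp_all add: d_def w_def)
  define G where "G = conic (\<lambda>j. [:v j:]) ([:T:] * [:0, 1:]\<^sup>2) ([:s:] * (1 - [:0, 1:]))"
  interpret shift: comm_ring_hom "\<lambda>P. fps_of_poly (P \<circ>\<^sub>p [:w, 1:]) oo d"
    by unfold_locales (simp_all add: pcompose_add pcompose_mult pcompose_1 fps_of_poly_add
        fps_of_poly_mult fps_compose_add_distrib fps_compose_mult_distrib d(1))
  have shift_const: "fps_of_poly ([:c:] \<circ>\<^sub>p [:w, 1:]) oo d = fps_const c" for c
    by (simp add: fps_of_poly_const)
  have shift_X: "fps_of_poly ([:0, 1:] \<circ>\<^sub>p [:w, 1:]) oo d = W"
    using d(1) by (simp add: pcompose_pCons fps_of_poly_pCons fps_compose_add_distrib d_def)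
  have "fps_of_poly (G \<circ>\<^sub>p [:w, 1:]) oo d
      = conic (\<lambda>j. fps_const (v j)) (fps_const T * W\<^sup>2) (fps_const s * (1 - W))"
    unfolding G_def shift.hom_conic comp_def shift.hom_mult shift.hom_power shift.hom_minus
      shift.hom_one shift_const shift_X ..
  moreover have "degree (G \<circ>\<^sub>p [:w, 1:]) < 5"
  proof -
    have "degree G \<le> 4"
      unfolding G_def conic_parabola_poly
      by (rule degree_le) (auto simp: coeff_pCons split: nat.split)
    then show ?thesis by (simp add: degree_pcompose)
  qed
  ultimately have "G \<circ>\<^sub>p [:w, 1:] = 0"
    using rel by (intro fps_of_poly_compose_eq_0[OF d]) simp_all
  then have "G = 0" by (rule pcompose_eq_0) simp
  then show ?thesis
    using conic_vanishing_on_parabola[OF assms(1,2)] unfolding G_def by blast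
qed

section \<open>Hasse--Schmidt derivations\<close>

locale hasse_schmidt =
  fixes D :: "nat \<Rightarrow> 'k::field \<Rightarrow> 'k"
  assumes D_0: "D 0 u = u"
    and D_add: "D k (u + v) = D k u + D k v"
    and D_mult: "D k (u * v) = (\<Sum>i\<le>k. D i u * D (k - i) v)"
begin

definition hasse_series :: "'k \<Rightarrow> 'k fps" where
  "hasse_series u = Abs_fps (\<lambda>k. D k u)"

lemma hasse_series_nth [simp]: "fps_nth (hasse_series u) k = D k u"
  by (simp add: hasse_series_def)

lemma hasse_series_add: "hasse_series (u + v) = hasse_series u + hasse_series v"
  by (rule fps_ext) (simp add: D_add)

lemma hasse_series_mult: "hasse_series (u * v) = hasse_series u * hasse_series v"
  by (rule fps_ext) (simp add: D_mult fps_mult_nth atLeast0AtMost)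

lemma hasse_series_one: "hasse_series 1 = 1"
proof -
  have "hasse_series 1 * hasse_series 1 = hasse_series 1 * 1"
    by (simp flip: hasse_series_mult)
  moreover have "hasse_series 1 \<noteq> 0"
    using D_0[of 1] by (metis hasse_series_nth fps_zero_nth one_neq_zero)
  ultimately show ?thesis by simp
qed

sublocale series: comm_ring_hom hasse_series
proof
  show "hasse_series 0 = 0"
    using hasse_series_add[of 0 0] by (metis add_0 add_cancel_right_right)
qed (simp_all add: hasse_series_one hasse_series_add hasse_series_mult)

definition hasse_constant :: "nat \<Rightarrow> 'k \<Rightarrow> bool" where
  "hasse_constant r u \<longleftrightarrow> fps_X ^ r dvd hasse_series u - fps_const u"

lemma hasse_constant_iff: "hasse_constant r u \<longleftrightarrow> (\<forall>k. 0 < k \<longrightarrow> k < r \<longrightarrow> D k u = 0)"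
  by (auto simp: hasse_constant_def fps_X_power_dvd_iff D_0)

lemma hasse_constant_2_iff: "hasse_constant 2 u \<longleftrightarrow> D 1 u = 0"
  by (auto simp: hasse_constant_iff less_2_cases_iff)

lemma hasse_constant_mono: "hasse_constant r u \<Longrightarrow> r' \<le> r \<Longrightarrow> hasse_constant r' u"
  by (simp add: hasse_constant_iff)

lemma hasse_constant_0: "hasse_constant r 0"
  and hasse_constant_1: "hasse_constant r 1"
  by (simp_all add: hasse_constant_def)

lemma hasse_constant_add: "hasse_constant r u \<Longrightarrow> hasse_constant r v \<Longrightarrow> hasse_constant r (u + v)"
  by (simp add: hasse_constant_iff D_add)

lemma hasse_constant_diff:
  assumes "hasse_constant r u" and "hasse_constant r v"
  shows "hasse_constant r (u - v)"
proof -
  have "hasse_series (u - v) - fps_const (u - v)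
      = (hasse_series u - fps_const u) - (hasse_series v - fps_const v)"
    by (simp add: series.hom_minus fps_const_sub)
  then show ?thesis using assms unfolding hasse_constant_def by (simp add: dvd_diff)
qed

lemma hasse_constant_mult:
  "hasse_constant r u \<Longrightarrow> hasse_constant r v \<Longrightarrow> hasse_constant r (u * v)"
  unfolding hasse_constant_def by (simp add: series.hom_mult dvd_mult_diff_mult flip: fps_const_mult)

lemma hasse_constant_power: "hasse_constant r u \<Longrightarrow> hasse_constant r (u ^ j)"
  by (induction j) (simp_all add: hasse_constant_1 hasse_constant_mult)

lemma hasse_constant_sum:
  "(\<And>i. i \<in> A \<Longrightarrow> hasse_constant r (f i)) \<Longrightarrow> hasse_constant r (sum f A)"
  by (induction A rule: infinite_finite_induct) (simp_all add: hasse_constant_0 hasse_constant_add)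

lemma hasse_constant_inverse:
  assumes "hasse_constant r u"
  shows "hasse_constant r (inverse u)"
proof (cases "u = 0")
  case False
  let ?H = "hasse_series (inverse u)" and ?c = "fps_const (inverse u)"
  have H: "?H * hasse_series u = 1"
    using False by (simp flip: series.hom_mult)
  have c: "?c * fps_const u = 1"
    using False by (simp flip: fps_const_mult)
  have "?H * ?c * (fps_const u - hasse_series u) = ?H * (?c * fps_const u) - ?c * (?H * hasse_series u)"
    by (simp add: algebra_simps)
  also have "\<dots> = ?H - ?c"
    by (simp only: H c mult_1_right)
  finally show ?thesis
    using assms unfolding hasse_constant_def by (metis dvd_mult dvd_minus_iff minus_diff_eq)
qed (simp add: hasse_constant_0)

lemma hasse_constant_divide:
  "hasse_constant r u \<Longrightarrow> hasse_constant r v \<Longrightarrow> hasse_constant r (u / v)"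
  by (simp add: divide_inverse hasse_constant_mult hasse_constant_inverse)

lemma hasse_constant_CHAR_power:
  assumes "prime CHAR('k)"
  shows "hasse_constant CHAR('k) (u ^ CHAR('k))"
proof -
  define d where "d = hasse_series u - fps_const u"
  have "fps_X dvd d"
    using fps_X_power_dvd_iff[of 1 d] by (simp add: d_def D_0)
  have "hasse_series (u ^ CHAR('k)) = (fps_const u + d) ^ CHAR('k)"
    by (simp add: d_def series.hom_power)
  also have "\<dots> = fps_const (u ^ CHAR('k)) + d ^ CHAR('k)"
    using assms by (simp add: freshmans_dream fps_const_power)
  finally show ?thesis
    unfolding hasse_constant_def using \<open>fps_X dvd d\<close> by (simp add: dvd_power_same)
qed

lemma conic_hasse_series_nth:
  "fps_nth (conic (\<lambda>j. fps_const (v j)) (hasse_series X) (hasse_series Y)) k =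
     (\<Sum>j<6. v j * D k (conic_monomials X Y ! j))"
proof -
  have "D k 1 = fps_nth 1 k"
    by (metis hasse_series_nth series.hom_one)
  then show ?thesis
    by (simp add: conic_def conic_monomials_def numeral_eq_Suc lessThan_Suc algebra_simps
        flip: series.hom_power series.hom_mult)
qed

lemma osculating_conic_of_parabola:
  assumes T: "hasse_constant 5 T" "T \<noteq> 0" and s: "hasse_constant 5 s" "s \<noteq> 0"
    and w: "\<not> hasse_constant 2 w"
    and x: "x = T * w\<^sup>2" and y: "y = s * (1 - w)"
    and rel: "fps_X ^ 5 dvd conic (\<lambda>j. fps_const (v j)) (hasse_series x) (hasse_series y)"
  shows "v 0 = 0 \<and> v 1 = 0 \<and> v 3 = - v 2 * s\<^sup>2 / T \<and> v 4 = - 2 * v 2 * s \<and> v 5 = v 2 * s\<^sup>2"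
proof -
  define W where "W = hasse_series w"
  have "hasse_series x - fps_const T * W\<^sup>2 = (hasse_series T - fps_const T) * W\<^sup>2"
    by (simp add: x W_def series.hom_mult series.hom_power algebra_simps)
  moreover have "hasse_series y - fps_const s * (1 - W) = (hasse_series s - fps_const s) * (1 - W)"
    by (simp add: y W_def series.hom_mult series.hom_minus algebra_simps)
  ultimately have "fps_X ^ 5 dvd conic (\<lambda>j. fps_const (v j)) (hasse_series x) (hasse_series y)
      - conic (\<lambda>j. fps_const (v j)) (fps_const T * W\<^sup>2) (fps_const s * (1 - W))"
    using T(1) s(1) unfolding hasse_constant_def by (intro conic_dvd_diff) simp_all
  from dvd_diff[OF rel this]
  have "fps_X ^ 5 dvd conic (\<lambda>j. fps_const (v j)) (fps_const T * W\<^sup>2) (fps_const s * (1 - W))"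
    by simp
  moreover have "fps_nth W 1 \<noteq> 0"
    using w by (simp add: W_def hasse_constant_2_iff)
  ultimately show ?thesis
    using T(2) s(2) by (intro conic_vanishing_on_fps_parabola)
qed

end

section \<open>The curve a x^n + b y^m = 1\<close>

lemma degree_one_plus_monom_power:
  fixes c :: "'a::idom"
  assumes "c \<noteq> 0" and "0 < k"
  shows "degree ((1 + monom c k) ^ j) = j * k"
proof -
  have "degree (1 + monom c k) = k"
    using assms by (subst degree_add_eq_right) (simp_all add: degree_monom_eq)
  moreover have "1 + monom c k \<noteq> 0"
    using assms \<open>degree (1 + monom c k) = k\<close> by auto
  ultimately show ?thesis by (simp add: degree_power_eq)
qed

locale fermat_curve =
  fixes \<iota> :: "'a::field \<Rightarrow> 'k::field" and a b :: 'a and n m :: nat and x y :: 'k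
  assumes function_field: "fermat_function_field \<iota> a b n m x y"
    and a_nonzero: "a \<noteq> 0" and b_nonzero: "b \<noteq> 0" and n_pos: "0 < n" and m_pos: "0 < m"
begin

sublocale emb: field_hom \<iota>
  using function_field by unfold_locales (auto simp: fermat_function_field_def is_field_emb_def)

sublocale emb_poly: comm_ring_hom "map_poly \<iota>"
  by unfold_locales (auto intro!: poly_eqI simp: coeff_map_poly coeff_mult emb.hom_sum emb.hom_mult
      emb.hom_add)

lemma curve_equation: "\<iota> a * x ^ n + \<iota> b * y ^ m = 1"
  using function_field by (simp add: fermat_function_field_def)

lemma x_transcendental:
  assumes "poly (map_poly \<iota> P) x = 0"
  shows "P = 0"
proof -
  have "(\<Sum>i<Suc (degree P). \<iota> (coeff P i) * x ^ i) = 0"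
    using assms by (simp add: poly_altdef coeff_map_poly degree_map_poly lessThan_Suc_atMost)
  then have "\<forall>i<Suc (degree P). coeff P i = 0"
    using function_field unfolding fermat_function_field_def by blast
  then show ?thesis by (metis leading_coeff_0_iff lessI)
qed

lemma x_nonzero: "x \<noteq> 0"
proof
  assume "x = 0"
  then have "poly (map_poly \<iota> (monom 1 1)) x = 0"
    by (simp add: map_poly_monom poly_monom)
  then show False using x_transcendental by fastforce
qed

lemma y_nonzero: "y \<noteq> 0"
proof
  assume "y = 0"
  then have "poly (map_poly \<iota> (monom a n - 1)) x = 0"
    using curve_equation m_pos by (simp add: emb_poly.hom_minus map_poly_monom poly_monom power_0_left)
  then have "monom a n - 1 = 0" by (rule x_transcendental)
  then have "coeff (monom a n - 1) n = 0" by simp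
  then show False using n_pos a_nonzero by simp
qed

definition w :: 'k where "w = \<iota> a * x ^ n"
definition t :: 'k where "t = \<iota> a ^ 2 * x ^ (2 * n - 1)"
definition g :: 'k where "g = \<iota> b * y ^ (m - 1)"

lemma t_nonzero: "t \<noteq> 0"
  using a_nonzero x_nonzero by (simp add: t_def)

lemma g_nonzero: "g \<noteq> 0"
  using b_nonzero y_nonzero by (simp add: g_def)

(* Oriented towards x: w and t are terms in x, so x = ... would loop as a rewrite rule. *)
lemma x_via_w: "inverse t * w\<^sup>2 = x"
proof -
  have "w\<^sup>2 = t * x"
    using n_pos by (simp add: w_def t_def power_mult_distrib algebra_simps flip: power_mult power_Suc)
  then show ?thesis using t_nonzero by simp
qed

lemma b_y_power_eq: "\<iota> b * y ^ m = 1 - w"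
  using curve_equation by (simp add: w_def algebra_simps)

lemma gy_eq: "g * y = 1 - w"
  using power_minus_mult[OF m_pos, of y] b_y_power_eq by (simp add: g_def mult.assoc)

lemma y_via_w: "inverse g * (1 - w) = y"
  using gy_eq g_nonzero by (simp flip: gy_eq)

lemma binomial_relation_degrees:
  assumes "c \<noteq> 0" and "0 < N"
    and "\<iota> (b ^ Q) * (1 - \<iota> c * x ^ N) ^ m = (1 - w) ^ (m + Q)"
  shows "m * N = (m + Q) * n"
proof -
  let ?L = "smult (b ^ Q) ((1 + monom (- c) N) ^ m)" and ?R = "(1 + monom (- a) n) ^ (m + Q)"
  have "poly (map_poly \<iota> (?L - ?R)) x = 0"
    using assms(3) by (simp add: w_def emb_poly.hom_minus emb_poly.hom_power emb_poly.hom_add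
        map_poly_smult map_poly_monom poly_monom emb.hom_mult emb.hom_uminus)
  then have "?L - ?R = 0" by (rule x_transcendental)
  then have "degree ?L = degree ?R" by simp
  then show ?thesis
    using assms(1,2) a_nonzero b_nonzero n_pos by (simp add: degree_one_plus_monom_power)
qed

lemma frobenius_point_off_parabola:
  assumes "odd q" and "1 < q" and "m \<le> n"
  shows "(g * y ^ q - 1)\<^sup>2 \<noteq> t * x ^ q"
proof
  assume on_parabola: "(g * y ^ q - 1)\<^sup>2 = t * x ^ q"
  obtain Q where q: "q = Suc Q" and "0 < Q" using assms(2) by (cases q) auto
  have "even Q" using assms(1) q by simp
  then obtain N where N: "2 * N = 2 * n + Q" by (metis evenE distrib_left)
  have "2 * n - 1 + q = 2 * N" using n_pos N q by simp
  then have "t * x ^ q = \<iota> a ^ 2 * x ^ (2 * N)"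
    by (simp add: t_def mult.assoc flip: power_add)
  also have "\<dots> = (\<iota> a * x ^ N)\<^sup>2"
    by (simp add: power_mult_distrib power_even_eq)
  finally have "(1 - g * y ^ q)\<^sup>2 = (\<iota> a * x ^ N)\<^sup>2"
    using on_parabola by (simp add: power2_commute)
  then obtain c where "c \<noteq> 0" and c: "1 - g * y ^ q = \<iota> c * x ^ N"
    using a_nonzero by (metis power2_eq_iff emb.hom_uminus minus_mult_left neg_equal_0_iff_equal)
  have "g * y ^ q = (1 - w) * y ^ Q"
    by (simp add: q flip: gy_eq)
  moreover have "g * y ^ q = 1 - \<iota> c * x ^ N"
    unfolding c[symmetric] by simp
  ultimately have "(1 - w) * y ^ Q = 1 - \<iota> c * x ^ N" by simp
  then have "\<iota> (b ^ Q) * (1 - \<iota> c * x ^ N) ^ m = \<iota> b ^ Q * ((1 - w) * y ^ Q) ^ m"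
    by (simp add: emb.hom_power)
  also have "\<dots> = (1 - w) ^ m * (\<iota> b * y ^ m) ^ Q"
    by (simp add: power_mult_distrib ac_simps flip: power_mult)
  also have "\<dots> = (1 - w) ^ (m + Q)"
    by (simp add: b_y_power_eq power_add)
  finally have "m * N = (m + Q) * n"
    using \<open>c \<noteq> 0\<close> N \<open>0 < Q\<close> by (intro binomial_relation_degrees) simp_all
  then have "m * (2 * n + Q) = (m + Q) * (2 * n)"
    unfolding N[symmetric] by (metis mult.assoc mult.commute)
  then have "m * Q = 2 * n * Q" by (simp add: algebra_simps)
  then show False using \<open>0 < Q\<close> assms(3) n_pos by simp
qed

end

section \<open>Frobenius orders with respect to conics\<close>

lemma frob_conic_det_zeroE:
  fixes D :: "nat \<Rightarrow> 'k::field \<Rightarrow> 'k"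
  assumes "frob_conic_det q D (conic_monomials x y) [0, 1, 2, 3, 4] = 0"
  obtains v where "\<exists>j<6. v j \<noteq> 0" and "conic v (x ^ q) (y ^ q) = 0"
    and "\<And>k. k < 5 \<Longrightarrow> (\<Sum>j<6. v j * D k (conic_monomials x y ! j)) = 0"
proof -
  define A where "A = mat 6 6 (\<lambda>(i, j). if i = 0 then (conic_monomials x y ! j) ^ q
      else D ([0, 1, 2, 3, 4] ! (i - 1)) (conic_monomials x y ! j))"
  have A: "A \<in> carrier_mat 6 6" by (simp add: A_def)
  moreover have "det A = 0" using assms by (simp only: A_def frob_conic_det_def)
  ultimately obtain u where u: "u \<in> carrier_vec 6" "u \<noteq> 0\<^sub>v 6" "A *\<^sub>v u = 0\<^sub>v 6"
    using det_0_iff_vec_prod_zero by blast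
  have row: "(\<Sum>j<6. A $$ (i, j) * u $ j) = 0" if "i < 6" for i
  proof -
    have "(A *\<^sub>v u) $ i = (\<Sum>j<6. A $$ (i, j) * u $ j)"
      using that u(1) A by (simp add: scalar_prod_def atLeast0LessThan)
    then show ?thesis using u(3) that by simp
  qed
  show ?thesis
  proof
    show "\<exists>j<6. u $ j \<noteq> 0"
    proof (rule ccontr)
      assume "\<not> (\<exists>j<6. u $ j \<noteq> 0)"
      then have "u = 0\<^sub>v 6" using u(1) by (intro eq_vecI) auto
      with u(2) show False ..
    qed
    have "(conic_monomials x y ! j) ^ q = conic_monomials (x ^ q) (y ^ q) ! j" if "j < 6" for j
      using that by (auto simp: conic_monomials_def numeral_eq_Suc less_Suc_eq power_mult_distrib
          simp flip: power_mult)
    then show "conic (\<lambda>j. u $ j) (x ^ q) (y ^ q) = 0"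
      using row[of 0] by (simp add: A_def mult.commute flip: sum_conic_monomials)
    show "(\<Sum>j<6. u $ j * D k (conic_monomials x y ! j)) = 0" if "k < 5" for k
    proof -
      have "[0, 1, 2, 3, 4] = [0..<5]" by (simp add: upt_rec)
      then have "[0, 1, 2, 3, 4] ! k = k" using that by simp
      then show ?thesis using row[of "Suc k"] that by (simp add: A_def mult.commute)
    qed
  qed
qed

lemma lexordp_upt_least:
  fixes \<nu> :: "nat list"
  assumes "sorted_wrt (<) \<nu>" and "\<forall>i\<in>set \<nu>. s \<le> i"
  shows "[s..<s + length \<nu>] = \<nu> \<or> lexordp (<) [s..<s + length \<nu>] \<nu>"
  using assms
proof (induction \<nu> arbitrary: s)
  case (Cons i \<nu>)
  have upt: "[s..<s + length (i # \<nu>)] = s # [Suc s..<Suc s + length \<nu>]"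
    using upt_conv_Cons[of s "s + Suc (length \<nu>)"] by simp
  show ?case
  proof (cases "i = s")
    case True
    then have "[Suc s..<Suc s + length \<nu>] = \<nu> \<or> lexordp (<) [Suc s..<Suc s + length \<nu>] \<nu>"
      using Cons.prems by (intro Cons.IH) (auto simp: Suc_le_eq)
    then show ?thesis using True unfolding upt by (auto simp: List.lexordp_def simp del: upt_Suc)
  next
    case False
    then show ?thesis using Cons.prems unfolding upt by (auto simp: List.lexordp_def simp del: upt_Suc)
  qed
qed simp

lemma CHAR_finite_field:
  assumes "prime p" and "card (UNIV :: 'a::{finite, field} set) = p ^ h"
  shows "CHAR('a) = p"
proof -
  have "prime CHAR('a)" by (simp add: finite_imp_CHAR_pos prime_CHAR_semidom)
  moreover have "CHAR('a) dvd p ^ h" using CHAR_dvd_CARD[where 'a = 'a] assms(2) by simp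
  ultimately show ?thesis using assms(1) by (metis prime_dvd_power primes_dvd_imp_eq)
qed

lemma (in field_hom) CHAR_eq: "CHAR('b) = CHAR('a)"
  by (rule CHAR_eqI) (auto simp: of_nat_eq_0_iff_char_dvd simp flip: hom_of_nat)

locale fermat_curve_hasse = fermat_curve \<iota> a b n m x y + hasse_schmidt D
  for \<iota> :: "'a::field \<Rightarrow> 'k::field" and a b n m x y and D :: "nat \<Rightarrow> 'k \<Rightarrow> 'k" +
  fixes \<tau> :: 'k
  assumes D_emb: "0 < k \<Longrightarrow> D k (\<iota> c) = 0"
    and D_1_separating: "D 1 \<tau> = 1"
begin

lemma hasse_constant_emb: "hasse_constant r (\<iota> c)"
  by (simp add: hasse_constant_iff D_emb)

lemma x_or_y_not_hasse_constant: "\<not> (hasse_constant 2 x \<and> hasse_constant 2 y)"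
proof
  assume xy: "hasse_constant 2 x \<and> hasse_constant 2 y"
  have poly_xy: "hasse_constant 2 (\<Sum>i<N. \<Sum>j<N. \<iota> (P i j) * x ^ i * y ^ j)" for N P
    using xy by (intro hasse_constant_sum hasse_constant_mult hasse_constant_power hasse_constant_emb)
      auto
  obtain N P Q where "\<tau> = (\<Sum>i<N. \<Sum>j<N. \<iota> (P i j) * x ^ i * y ^ j)
      / (\<Sum>i<N. \<Sum>j<N. \<iota> (Q i j) * x ^ i * y ^ j)"
    using function_field unfolding fermat_function_field_def by blast
  then have "hasse_constant 2 \<tau>" using poly_xy by (simp add: hasse_constant_divide)
  then show False using D_1_separating by (simp add: hasse_constant_2_iff)
qed

lemma hasse_constant_emb_mult_power:
  assumes "prime CHAR('k)" and "r \<le> CHAR('k)" and "CHAR('k) dvd e"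
  shows "hasse_constant r (\<iota> c * u ^ e)"
proof -
  obtain l where "e = CHAR('k) * l" using assms(3) by (elim dvdE)
  then have "u ^ e = (u ^ l) ^ CHAR('k)" by (simp add: mult.commute flip: power_mult)
  then have "hasse_constant CHAR('k) (u ^ e)"
    using hasse_constant_CHAR_power[OF assms(1), of "u ^ l"] by simp
  then show ?thesis
    using assms(2) by (intro hasse_constant_mult hasse_constant_emb) (rule hasse_constant_mono)
qed

lemma w_not_hasse_constant:
  assumes "hasse_constant 2 t" and "hasse_constant 2 g"
  shows "\<not> hasse_constant 2 w"
proof
  assume "hasse_constant 2 w"
  then have "hasse_constant 2 (inverse t * w\<^sup>2) \<and> hasse_constant 2 (inverse g * (1 - w))"
    using assms by (simp add: hasse_constant_mult hasse_constant_inverse hasse_constant_power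
        hasse_constant_diff hasse_constant_1)
  then have "hasse_constant 2 x \<and> hasse_constant 2 y" by (simp only: x_via_w y_via_w)
  with x_or_y_not_hasse_constant show False ..
qed

lemma frob_conic_det_nonzero:
  assumes char: "prime CHAR('k)" "5 \<le> CHAR('k)"
    and char_dvd: "CHAR('k) dvd 2 * n - 1" "CHAR('k) dvd m - 1"
    and q: "odd q" "1 < q" and "m \<le> n"
  shows "frob_conic_det q D (conic_monomials x y) [0, 1, 2, 3, 4] \<noteq> 0"
proof
  assume "frob_conic_det q D (conic_monomials x y) [0, 1, 2, 3, 4] = 0"
  then obtain v where v_nonzero: "\<exists>j<6. v j \<noteq> 0" and frob_row: "conic v (x ^ q) (y ^ q) = 0"
    and rows: "\<And>k. k < 5 \<Longrightarrow> (\<Sum>j<6. v j * D k (conic_monomials x y ! j)) = 0"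
    by (elim frob_conic_det_zeroE) blast
  have t: "hasse_constant 5 t"
    using hasse_constant_emb_mult_power[OF char char_dvd(1), of "a\<^sup>2" x]
    by (simp add: t_def emb.hom_power)
  have g: "hasse_constant 5 g"
    using hasse_constant_emb_mult_power[OF char char_dvd(2), of b y] by (simp add: g_def)
  have w: "\<not> hasse_constant 2 w"
    using hasse_constant_mono[OF t] hasse_constant_mono[OF g] by (intro w_not_hasse_constant) simp_all
  have rel: "fps_X ^ 5 dvd conic (\<lambda>j. fps_const (v j)) (hasse_series x) (hasse_series y)"
    using rows by (simp add: fps_X_power_dvd_iff conic_hasse_series_nth)
  have "inverse t \<noteq> 0" and "inverse g \<noteq> 0"
    using t_nonzero g_nonzero by simp_all
  then have coeffs: "v 0 = 0 \<and> v 1 = 0 \<and> v 3 = - v 2 * (inverse g)\<^sup>2 / inverse t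
      \<and> v 4 = - 2 * v 2 * inverse g \<and> v 5 = v 2 * (inverse g)\<^sup>2"
    by (rule osculating_conic_of_parabola[OF hasse_constant_inverse[OF t] _ hasse_constant_inverse[OF g] _
          w x_via_w[symmetric] y_via_w[symmetric] rel])
  have "conic v (x ^ q) (y ^ q) = v 2 * (inverse g)\<^sup>2 * ((g * y ^ q - 1)\<^sup>2 - t * x ^ q)"
    using coeffs g_nonzero t_nonzero by (simp add: conic_def field_simps power2_eq_square)
  then have "v 2 = 0"
    using frob_row frobenius_point_off_parabola[OF q \<open>m \<le> n\<close>] g_nonzero by simp
  then show False
    using coeffs v_nonzero by (auto simp: less_Suc_eq numeral_eq_Suc)
qed

end

theorem proposition3p13:
  fixes p h n m q :: nat and a b :: "'a::{finite, field}"
    and \<iota> :: "'a \<Rightarrow> 'k::field" and x y \<tau> :: 'k and D :: "nat \<Rightarrow> 'k \<Rightarrow> 'k"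
  assumes "prime p" and "p > 5" and "q = p ^ h" and "card (UNIV :: 'a set) = q"
    and "a \<noteq> 0" and "b \<noteq> 0"
    and "n \<ge> m" and "m > 2"
    and "p dvd (2 * n - 1)" and "p dvd (m - 1)"
    and "fermat_function_field \<iota> a b n m x y"
    and "hasse_derivatives \<iota> \<tau> D"
  shows "frob_classical_conics q D x y"
proof -
  interpret fermat_curve_hasse \<iota> a b n m x y D \<tau>
    using assms(5-8,11,12) by unfold_locales (auto simp: hasse_derivatives_def)
  have "CHAR('k) = p"
    using emb.CHAR_eq CHAR_finite_field[OF assms(1)] assms(3,4) by simp
  moreover have "odd q"
    using assms(1-3) by (simp add: prime_odd_nat)
  moreover have "1 < q"
    using card_mono[of UNIV "{0::'a, 1}"] assms(4) by simp
  ultimately have "frob_conic_det q D (conic_monomials x y) [0, 1, 2, 3, 4] \<noteq> 0"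
    using assms(1,2,7,9,10) by (intro frob_conic_det_nonzero) simp_all
  moreover have "[0, 1, 2, 3, 4] = \<nu> \<or> lexordp (<) [0, 1, 2, 3, 4] \<nu>"
    if "length \<nu> = 5" and "sorted_wrt (<) \<nu>" for \<nu> :: "nat list"
  proof -
    have "[0..<5] = [0::nat, 1, 2, 3, 4]" by (simp add: upt_rec)
    then show ?thesis using lexordp_upt_least[of \<nu> 0] that by simp
  qed
  ultimately show ?thesis
    unfolding frob_classical_conics_def frob_conic_order_seq_def by auto
qed

end
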